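(* Let $C$ be a binary linear $[n,k]$ code whose hull $\mathrm{Hull}(C)=C\cap C^{\perp}$ has dimension $\ell$, where $0\le\ell\le k$. Let $G$ be a $k\times n$ generator matrix of $C$ with rows $\mathbf r_1,\dots,\mathbf r_k$ and $H$ an $(n-k)\times n$ parity check matrix of $C$ with rows $\mathbf s_1,\dots,\mathbf s_{n-k}$. Suppose $\mathbf x=(x_1,\dots,x_n)\in\mathbb F_2^n$ satisfies $\mathbf x\cdot\mathbf x=0$. Put $y_i=\mathbf x\cdot\mathbf r_i$ ($1\le i\le k$) and $z_j=\mathbf x\cdot\mathbf s_j$ ($1\le j\le n-k$). Then the matrix \[ G_3=\begin{bmatrix} 1 & 0 & x_1\ \cdots\ x_n\\ y_1 & y_1 & \mathbf r_1\\ \vdots & \vdots & \vdots\\ y_k & y_k & \mathbf r_k\end{bmatrix} \] generates a binary linear $[n+2,k+1]$ code $C_3$ whose hull has dimension $\ell$, and the matrix \[ H_3=\begin{bmatrix} 0 & 1 & x_1\ \cdots\ x_n\\ z_1 & z_1 & \mathbf s_1\\ \vdots & \vdots & \vdots\\ z_{n-k} & z_{n-k} & \mathbf s_{n-k}\end{bmatrix} \] is a parity check matrix for $C_3$.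
   Context: All codes are binary linear codes; the dual is taken with respect to the standard dot product on $\mathbb F_2^n$, and $\mathrm{Hull}(C)=C\cap C^{\perp}$. A parity check matrix of $C$ is a generator matrix of $C^{\perp}$. The code $C_3$ is called Construction IV. *)

theory Defs
  imports "Jordan_Normal_Form.VS_Connect" "HOL-Library.Z2"
begin

definition code_of :: "nat \<Rightarrow> bit mat \<Rightarrow> bit vec set" where
  "code_of n M = vec_space.row_space n M"

definition code_dim :: "nat \<Rightarrow> bit vec set \<Rightarrow> nat" where
  "code_dim n W = vectorspace.dim class_ring ((module_vec TYPE(bit) n)\<lparr>carrier := W\<rparr>)"

definition dual :: "nat \<Rightarrow> bit vec set \<Rightarrow> bit vec set" where
  "dual n C = {v \<in> carrier_vec n. \<forall>c \<in> C. v \<bullet> c = 0}"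

definition code_hull :: "nat \<Rightarrow> bit vec set \<Rightarrow> bit vec set" where
  "code_hull n C = C \<inter> dual n C"

definition is_generator_matrix :: "nat \<Rightarrow> nat \<Rightarrow> bit mat \<Rightarrow> bit vec set \<Rightarrow> bool" where
  "is_generator_matrix n k G C \<longleftrightarrow>
     G \<in> carrier_mat k n \<and> code_of n G = C \<and> code_dim n C = k"

definition is_parity_check_matrix :: "nat \<Rightarrow> nat \<Rightarrow> bit mat \<Rightarrow> bit vec set \<Rightarrow> bool" where
  "is_parity_check_matrix n k H C \<longleftrightarrow> is_generator_matrix n (n - k) H (dual n C)"

text \<open>Construction IV.  Row 0 of G3 is (1, 0, x); row i+1 is (y_i, y_i, r_i) with y_i = x . r_i.
  Row 0 of H3 is (0, 1, x); row j+1 is (z_j, z_j, s_j) with z_j = x . s_j.\<close>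
definition constr_G3 :: "bit vec \<Rightarrow> bit mat \<Rightarrow> bit mat" where
  "constr_G3 x G = mat (dim_row G + 1) (dim_col G + 2) (\<lambda>(i, j).
     if i = 0 then (if j = 0 then 1 else if j = 1 then 0 else x $ (j - 2))
     else (if j < 2 then x \<bullet> row G (i - 1) else G $$ (i - 1, j - 2)))"

definition constr_H3 :: "bit vec \<Rightarrow> bit mat \<Rightarrow> bit mat" where
  "constr_H3 x H = mat (dim_row H + 1) (dim_col H + 2) (\<lambda>(i, j).
     if i = 0 then (if j = 0 then 0 else if j = 1 then 1 else x $ (j - 2))
     else (if j < 2 then x \<bullet> row H (i - 1) else H $$ (i - 1, j - 2)))"

end

theory Submission
  imports Defs
begin

(* Fix x with x . x = 0 and put ext_vec x a b c = a (1, 0, x) + b (0, 1, x) + (x . c, x . c, c).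
   Then (a, b, c) |-> ext_vec x a b c is a bijection from F_2 x F_2 x F_2^n onto F_2^(n+2) that
   turns the dot product into a a' + b b' + c . c'. The rows of G3 are the images of (1, 0, 0) and
   (0, 0, r_i), so C3 is the image of F_2 x 0 x C; its dual is therefore the image of 0 x F_2 x C^perp,
   which is spanned by the rows of H3, and its hull is the image of 0 x 0 x Hull(C). The dimensions
   follow by counting, as a binary code of dimension d has 2^d words. *)

lemma finite_carrier_vec: "finite (carrier_vec n :: 'a :: finite vec set)"
proof (rule finite_subset)
  show "carrier_vec n \<subseteq> vec_of_list ` {xs. set xs \<subseteq> (UNIV :: 'a set) \<and> length xs = n}"
    by (auto intro!: image_eqI[of _ _ "list_of_vec _"] simp: vec_list)
  show "finite (vec_of_list ` {xs. set xs \<subseteq> (UNIV :: 'a set) \<and> length xs = n})"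
    by (intro finite_imageI finite_lists_length_eq) simp
qed

lemma subspace_vecD:
  assumes "subspace class_ring W (module_vec TYPE('a :: field) n)"
  shows "W \<subseteq> carrier_vec n" and "0\<^sub>v n \<in> W"
    and "v \<in> W \<Longrightarrow> w \<in> W \<Longrightarrow> v + w \<in> W" and "v \<in> W \<Longrightarrow> r \<cdot>\<^sub>v v \<in> W"
  using assms by (auto simp: subspace_def submodule_def module_vec_simps class_ring_simps)

lemma card_subspace:
  fixes W :: "'a :: {finite, field} vec set"
  assumes "subspace class_ring W (module_vec TYPE('a) n)"
  shows "card W = card (UNIV :: 'a set) ^ vectorspace.dim class_ring ((module_vec TYPE('a) n)\<lparr>carrier := W\<rparr>)"
proof -
  interpret vec_space "TYPE('a)" n .
  interpret W: vectorspace class_ring "vs W" by (rule subspace_is_vs[OF assms])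
  have "finite W"
    using subspace_vecD(1) [OF assms] finite_carrier_vec finite_subset by blast
  moreover have "W.span W = W"
    using W.span_is_subset2[of W] W.in_own_span[of W] by auto
  ultimately have "W.fin_dim" unfolding W.fin_dim_def by auto
  then obtain \<beta> where \<beta>: "finite \<beta>" "W.basis \<beta>" using W.finite_basis_exists by blast
  have \<beta>_W: "\<beta> \<subseteq> W" using \<beta>(2) unfolding W.basis_def by simp
  have unique: "\<forall>v. v \<in> W \<longrightarrow> (\<exists>!a. a \<in> \<beta> \<rightarrow>\<^sub>E UNIV \<and> W.lincomb a \<beta> = v)"
    using W.basis_criterion[OF \<beta>(1)] \<beta>_W \<beta>(2) by (simp add: class_ring_simps)
  have lincomb_W: "W.lincomb a \<beta> \<in> W" if "a \<in> \<beta> \<rightarrow>\<^sub>E UNIV" for a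
    using W.lincomb_closed[of \<beta> a] \<beta>_W that by (simp add: class_ring_simps)
  have "bij_betw (\<lambda>a. W.lincomb a \<beta>) (\<beta> \<rightarrow>\<^sub>E UNIV) W"
  proof (rule bij_betwI')
    fix a b assume a: "a \<in> \<beta> \<rightarrow>\<^sub>E (UNIV :: 'a set)" and b: "b \<in> \<beta> \<rightarrow>\<^sub>E (UNIV :: 'a set)"
    have "\<exists>!c. c \<in> \<beta> \<rightarrow>\<^sub>E UNIV \<and> W.lincomb c \<beta> = W.lincomb a \<beta>"
      using unique lincomb_W [OF a] by blast
    then show "(W.lincomb a \<beta> = W.lincomb b \<beta>) = (a = b)"
      using a b by auto
  next
    fix v assume "v \<in> W"
    then obtain a where "a \<in> \<beta> \<rightarrow>\<^sub>E UNIV" "W.lincomb a \<beta> = v" using unique by blast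
    then show "\<exists>a \<in> \<beta> \<rightarrow>\<^sub>E UNIV. v = W.lincomb a \<beta>" by auto
  qed (rule lincomb_W)
  then have "card W = card (\<beta> \<rightarrow>\<^sub>E (UNIV :: 'a set))" by (simp add: bij_betw_same_card)
  also have "\<dots> = card (UNIV :: 'a set) ^ W.dim" using \<beta> by (simp add: card_PiE W.dim_basis)
  finally show ?thesis .
qed

lemma subspace_vecI:
  fixes W :: "'a :: field vec set"
  assumes "W \<subseteq> carrier_vec n" and "0\<^sub>v n \<in> W"
    and "\<And>v w. v \<in> W \<Longrightarrow> w \<in> W \<Longrightarrow> v + w \<in> W"
    and "\<And>r v. v \<in> W \<Longrightarrow> r \<cdot>\<^sub>v v \<in> W"
  shows "subspace class_ring W (module_vec TYPE('a) n)"
proof -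
  interpret vec_space "TYPE('a)" n .
  show ?thesis
    unfolding subspace_def submodule_def
    using assms vec_vs[where 'a = 'a and n = n] by (simp add: vectorspace_def class_ring_simps)
qed

lemma subspace_Int:
  assumes A: "subspace K A V" and B: "subspace K B V"
  shows "subspace K (A \<inter> B) V"
proof -
  interpret A: submodule K A V using A by (rule subspace.submod)
  interpret B: submodule K B V using B by (rule subspace.submod)
  have "submodule K (A \<inter> B) V"
    unfolding submodule_def using A.module A.subset by auto
  then show ?thesis using A by (simp add: subspace_def)
qed

instance bit :: finite
  by standard (rule finite_subset [of _ "{0, 1}"], auto)

lemma card_UNIV_bit: "card (UNIV :: bit set) = 2"
proof -
  have "(UNIV :: bit set) = {0, 1}" by auto
  then have "card (UNIV :: bit set) = card {0 :: bit, 1}" by (rule arg_cong)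
  then show ?thesis by simp
qed

(* Keep + and * on bit as ring operations instead of rewriting them to xor/and, so that
   algebra_simps together with the two cancellation rules below normalises F_2 identities. *)
declare add_bit_eq_xor [simp del] mult_bit_eq_and [simp del]

lemma bit_add_self [simp]: "(t :: bit) + t = 0"
  by (simp add: add_bit_eq_xor)

lemma bit_add_self_left [simp]: "(t :: bit) + (t + s) = s"
  by (simp add: add.assoc [symmetric])

lemma bit_vec_add_self_left:
  "u \<in> carrier_vec n \<Longrightarrow> v \<in> carrier_vec n \<Longrightarrow> (u :: bit vec) + (u + v) = v"
  by (rule eq_vecI) auto

lemma code_of_eq:
  assumes "M \<in> carrier_mat m n"
  shows "code_of n M = {M\<^sup>T *\<^sub>v y | y. y \<in> carrier_vec m}"
  using vec_space.row_space_eq [OF assms] assms by (auto simp: code_of_def)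

lemma subspace_code_of:
  assumes "M \<in> carrier_mat m n"
  shows "subspace class_ring (code_of n M) (module_vec TYPE(bit) n)"
proof -
  interpret vec_space "TYPE(bit)" n .
  show ?thesis
    unfolding code_of_def row_space_def
    using assms by (intro span_is_subspace) (auto simp: set_rows_carrier)
qed

lemma subspace_dual:
  assumes "S \<subseteq> carrier_vec n"
  shows "subspace class_ring (dual n S) (module_vec TYPE(bit) n)"
  using assms
  by (intro subspace_vecI) (auto simp: dual_def subset_iff add_scalar_prod_distrib [of _ n])

lemma subspace_code_hull:
  assumes "subspace class_ring C (module_vec TYPE(bit) n)"
  shows "subspace class_ring (code_hull n C) (module_vec TYPE(bit) n)"
  unfolding code_hull_def
  using assms by (intro subspace_Int subspace_dual subspace_vecD(1))

lemma card_eq_two_pow_code_dim: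
  assumes "subspace class_ring W (module_vec TYPE(bit) n)"
  shows "card W = 2 ^ code_dim n W"
  using card_subspace [OF assms] by (simp add: code_dim_def card_UNIV_bit)

lemma code_dim_eqI:
  assumes "subspace class_ring W (module_vec TYPE(bit) n)" and "card W = 2 ^ d"
  shows "code_dim n W = d"
  using card_eq_two_pow_code_dim [OF assms(1)] assms(2) by simp

lemma code_dim_le:
  assumes "subspace class_ring W (module_vec TYPE(bit) n)"
  shows "code_dim n W \<le> n"
proof -
  interpret vec_space "TYPE(bit)" n .
  have "subspace class_ring (carrier_vec n) V"
    by (intro subspace_vecI) auto
  moreover have "code_dim n (carrier_vec n) = n"
    using dim_is_n by (simp add: code_dim_def module_vec_def)
  ultimately have "card (carrier_vec n :: bit vec set) = 2 ^ n"
    using card_eq_two_pow_code_dim by metis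
  moreover have "card W \<le> card (carrier_vec n :: bit vec set)"
    using subspace_vecD(1) [OF assms] finite_carrier_vec by (rule card_mono [rotated])
  ultimately show ?thesis
    using card_eq_two_pow_code_dim [OF assms] by simp
qed

definition ext_vec :: "bit vec \<Rightarrow> bit \<Rightarrow> bit \<Rightarrow> bit vec \<Rightarrow> bit vec" where
  "ext_vec x a b c = vCons (a + x \<bullet> c) (vCons (b + x \<bullet> c) ((a + b) \<cdot>\<^sub>v x + c))"

lemma ext_vec_carrier [simp]:
  "x \<in> carrier_vec n \<Longrightarrow> c \<in> carrier_vec n \<Longrightarrow> ext_vec x a b c \<in> carrier_vec (n + 2)"
  by (simp add: ext_vec_def)

lemma index_ext_vec [simp]:
  "ext_vec x a b c $ 0 = a + x \<bullet> c"
  "ext_vec x a b c $ Suc 0 = b + x \<bullet> c"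
  "dim_vec x = dim_vec c \<Longrightarrow> j < dim_vec c \<Longrightarrow> ext_vec x a b c $ Suc (Suc j) = (a + b) * x $ j + c $ j"
  by (simp_all add: ext_vec_def)

lemma dim_ext_vec [simp]: "dim_vec (ext_vec x a b c) = dim_vec c + 2"
  by (simp add: ext_vec_def)

lemma ext_vec_add:
  assumes "x \<in> carrier_vec n" and "c \<in> carrier_vec n" and "c' \<in> carrier_vec n"
  shows "ext_vec x a b c + ext_vec x a' b' c' = ext_vec x (a + a') (b + b') (c + c')"
  using assms
  by (intro eq_vecI) (auto simp: ext_vec_def vec_index_vCons scalar_prod_add_distrib [of _ n] algebra_simps)

lemma ext_vec_smult:
  assumes "x \<in> carrier_vec n" and "c \<in> carrier_vec n"
  shows "r \<cdot>\<^sub>v ext_vec x a b c = ext_vec x (r * a) (r * b) (r \<cdot>\<^sub>v c)"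
  using assms by (intro eq_vecI) (auto simp: ext_vec_def vec_index_vCons algebra_simps)

lemma ext_vec_zero: "x \<in> carrier_vec n \<Longrightarrow> ext_vec x 0 0 (0\<^sub>v n) = 0\<^sub>v (n + 2)"
  by (intro eq_vecI) (auto simp: ext_vec_def vec_index_vCons)

lemma scalar_prod_ext_vec:
  assumes "x \<in> carrier_vec n" and "x \<bullet> x = 0" and "c \<in> carrier_vec n" and "d \<in> carrier_vec n"
  shows "ext_vec x a b c \<bullet> ext_vec x a' b' d = a * a' + b * b' + c \<bullet> d"
proof -
  have "((a + b) \<cdot>\<^sub>v x + c) \<bullet> ((a' + b') \<cdot>\<^sub>v x + d)
      = (a + b) * (a' + b') * (x \<bullet> x) + (a + b) * (x \<bullet> d) + (a' + b') * (x \<bullet> c) + c \<bullet> d"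
    using assms by (simp add: add_scalar_prod_distrib [of _ n] scalar_prod_add_distrib [of _ n]
        comm_scalar_prod [of c n x] algebra_simps)
  then show ?thesis
    using assms(2) by (simp add: ext_vec_def algebra_simps)
qed

lemma ext_vec_eq_iff:
  assumes "x \<in> carrier_vec n" and "c \<in> carrier_vec n" and "c' \<in> carrier_vec n"
  shows "ext_vec x a b c = ext_vec x a' b' c' \<longleftrightarrow> a = a' \<and> b = b' \<and> c = c'"
proof
  assume "ext_vec x a b c = ext_vec x a' b' c'"
  then have first: "a + x \<bullet> c = a' + x \<bullet> c'" and second: "b + x \<bullet> c = b' + x \<bullet> c'"
    and tail: "(a + b) \<cdot>\<^sub>v x + c = (a' + b') \<cdot>\<^sub>v x + c'"
    by (simp_all add: ext_vec_def)
  have "a + b = a' + b'"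
    using arg_cong2 [OF first second, of "(+)"] by (simp add: algebra_simps)
  then have "c = c'"
    using arg_cong [OF tail, of "(+) ((a + b) \<cdot>\<^sub>v x)"] assms
    by (simp add: bit_vec_add_self_left [of _ n])
  then show "a = a' \<and> b = b' \<and> c = c'"
    using first second by simp
qed simp

lemma ext_vec_cases:
  assumes x: "x \<in> carrier_vec n" "x \<bullet> x = 0" and v: "v \<in> carrier_vec (n + 2)"
  obtains a b c where "c \<in> carrier_vec n" and "v = ext_vec x a b c"
proof -
  obtain p w where v_eq: "v = vCons p w" using v by (cases v) auto
  then have "w \<in> carrier_vec (Suc n)" using v by auto
  then obtain q y where w_eq: "w = vCons q y" by (cases w) auto
  with \<open>w \<in> carrier_vec (Suc n)\<close> have y: "y \<in> carrier_vec n" by simp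
  define c where "c = (p + q) \<cdot>\<^sub>v x + y"
  have c: "c \<in> carrier_vec n" using x y by (simp add: c_def)
  have "x \<bullet> c = x \<bullet> y"
    using x y by (simp add: c_def scalar_prod_add_distrib [of _ n])
  then have "v = ext_vec x (p + x \<bullet> y) (q + x \<bullet> y) c"
    using x y by (simp add: v_eq w_eq ext_vec_def c_def algebra_simps bit_vec_add_self_left [of _ n])
  with c show thesis ..
qed

lemma transpose_mult_vCons_ext_rows:
  assumes M: "M \<in> carrier_mat m n" and x: "x \<in> carrier_vec n" and y: "y \<in> carrier_vec m"
    and M': "M' \<in> carrier_mat (Suc m) (n + 2)"
    and row_0: "row M' 0 = ext_vec x \<alpha> \<beta> (0\<^sub>v n)"
    and row_Suc: "\<And>i. i < m \<Longrightarrow> row M' (Suc i) = ext_vec x 0 0 (row M i)"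
  shows "M'\<^sup>T *\<^sub>v vCons a y = ext_vec x (a * \<alpha>) (a * \<beta>) (M\<^sup>T *\<^sub>v y)"
proof (rule eq_vecI)
  fix j assume "j < dim_vec (ext_vec x (a * \<alpha>) (a * \<beta>) (M\<^sup>T *\<^sub>v y))"
  then have j: "j < n + 2" using M by (simp add: ext_vec_def)
  have "col M' j = vCons (row M' 0 $ j) (vec m (\<lambda>i. row M' (Suc i) $ j))"
    using M' j by (intro eq_vecI) (auto simp: vec_index_vCons)
  also have "\<dots> = vCons (ext_vec x \<alpha> \<beta> (0\<^sub>v n) $ j) (vec m (\<lambda>i. ext_vec x 0 0 (row M i) $ j))"
    using row_0 row_Suc by auto
  finally have col: "(M'\<^sup>T *\<^sub>v vCons a y) $ j
      = a * ext_vec x \<alpha> \<beta> (0\<^sub>v n) $ j + vec m (\<lambda>i. ext_vec x 0 0 (row M i) $ j) \<bullet> y"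
    using M' j by simp
  have row_x: "vec m (\<lambda>i. x \<bullet> row M i) \<bullet> y = x \<bullet> (M\<^sup>T *\<^sub>v y)"
  proof -
    have "vec m (\<lambda>i. x \<bullet> row M i) = M *\<^sub>v x"
      using M x by (intro eq_vecI) (auto simp: comm_scalar_prod [of x n])
    then show ?thesis
      using transpose_vec_mult_scalar [OF M x y] comm_scalar_prod [of y m] comm_scalar_prod [of x n] M x y
      by simp
  qed
  consider "j = 0" | "j = Suc 0" | i where "j = Suc (Suc i)" "i < n"
    using j by (metis add_2_eq_Suc' less_Suc_eq_0_disj not_less_eq)
  then show "(M'\<^sup>T *\<^sub>v vCons a y) $ j = ext_vec x (a * \<alpha>) (a * \<beta>) (M\<^sup>T *\<^sub>v y) $ j"
  proof cases
    case (3 i)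
    have "vec m (\<lambda>i'. ext_vec x 0 0 (row M i') $ j) = col M i"
      using 3 M x by (intro eq_vecI) auto
    then show ?thesis
      using col 3 M x y by (simp add: algebra_simps)
  qed (use col row_x x in \<open>simp_all add: algebra_simps\<close>)
qed (use M M' in simp)

definition ext_code :: "bit vec \<Rightarrow> bit \<Rightarrow> bit \<Rightarrow> bit vec set \<Rightarrow> bit vec set" where
  "ext_code x \<alpha> \<beta> S = {ext_vec x (a * \<alpha>) (a * \<beta>) c | a c. c \<in> S}"

lemma code_of_ext_rows:
  assumes M: "M \<in> carrier_mat m n" and x: "x \<in> carrier_vec n"
    and M': "M' \<in> carrier_mat (m + 1) (n + 2)"
    and row_0: "row M' 0 = ext_vec x \<alpha> \<beta> (0\<^sub>v n)"
    and row_Suc: "\<And>i. i < m \<Longrightarrow> row M' (Suc i) = ext_vec x 0 0 (row M i)"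
  shows "code_of (n + 2) M' = ext_code x \<alpha> \<beta> (code_of n M)"
proof -
  from M' have "M' \<in> carrier_mat (Suc m) (n + 2)" by simp
  note transpose_mult = transpose_mult_vCons_ext_rows [OF M x _ this row_0 row_Suc]
  show ?thesis
  proof (intro equalityI subsetI)
    fix v assume "v \<in> code_of (n + 2) M'"
    then obtain z where z: "z \<in> carrier_vec (Suc m)" and v: "v = M'\<^sup>T *\<^sub>v z"
      unfolding code_of_eq [OF M'] by auto
    from z obtain a y where "z = vCons a y" and y: "y \<in> carrier_vec m" by (cases z) auto
    with v have "v = ext_vec x (a * \<alpha>) (a * \<beta>) (M\<^sup>T *\<^sub>v y)" by (simp add: transpose_mult)
    with y show "v \<in> ext_code x \<alpha> \<beta> (code_of n M)"
      unfolding ext_code_def code_of_eq [OF M] by blast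
  next
    fix v assume "v \<in> ext_code x \<alpha> \<beta> (code_of n M)"
    then obtain a y where y: "y \<in> carrier_vec m" and "v = ext_vec x (a * \<alpha>) (a * \<beta>) (M\<^sup>T *\<^sub>v y)"
      unfolding ext_code_def code_of_eq [OF M] by blast
    then have "v = M'\<^sup>T *\<^sub>v vCons a y" by (simp add: transpose_mult)
    with y show "v \<in> code_of (n + 2) M'"
      unfolding code_of_eq [OF M'] by (auto intro!: exI [of _ "vCons a y"])
  qed
qed

lemma carrier_constr_G3: "G \<in> carrier_mat k n \<Longrightarrow> constr_G3 x G \<in> carrier_mat (k + 1) (n + 2)"
  by (simp add: constr_G3_def)

lemma carrier_constr_H3: "H \<in> carrier_mat k n \<Longrightarrow> constr_H3 x H \<in> carrier_mat (k + 1) (n + 2)"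
  by (simp add: constr_H3_def)

lemma row_constr_G3:
  assumes "G \<in> carrier_mat k n" and "x \<in> carrier_vec n"
  shows "row (constr_G3 x G) 0 = ext_vec x 1 0 (0\<^sub>v n)"
    and "i < k \<Longrightarrow> row (constr_G3 x G) (Suc i) = ext_vec x 0 0 (row G i)"
  using assms by (auto simp: constr_G3_def ext_vec_def vec_index_vCons comm_scalar_prod [of x n] numeral_2_eq_2)

lemma row_constr_H3:
  assumes "H \<in> carrier_mat k n" and "x \<in> carrier_vec n"
  shows "row (constr_H3 x H) 0 = ext_vec x 0 1 (0\<^sub>v n)"
    and "i < k \<Longrightarrow> row (constr_H3 x H) (Suc i) = ext_vec x 0 0 (row H i)"
  using assms by (auto simp: constr_H3_def ext_vec_def vec_index_vCons comm_scalar_prod [of x n] numeral_2_eq_2)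

lemma code_of_constr_G3:
  assumes "G \<in> carrier_mat k n" and "x \<in> carrier_vec n"
  shows "code_of (n + 2) (constr_G3 x G) = ext_code x 1 0 (code_of n G)"
  by (rule code_of_ext_rows [OF assms carrier_constr_G3 [OF assms(1)] row_constr_G3 [OF assms]])

lemma code_of_constr_H3:
  assumes "H \<in> carrier_mat k n" and "x \<in> carrier_vec n"
  shows "code_of (n + 2) (constr_H3 x H) = ext_code x 0 1 (code_of n H)"
  by (rule code_of_ext_rows [OF assms carrier_constr_H3 [OF assms(1)] row_constr_H3 [OF assms]])

lemma card_ext_code:
  assumes "x \<in> carrier_vec n" and "S \<subseteq> carrier_vec n" and "\<alpha> \<noteq> 0 \<or> \<beta> \<noteq> 0"
  shows "card (ext_code x \<alpha> \<beta> S) = 2 * card S"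
proof -
  let ?f = "\<lambda>(a, c). ext_vec x (a * \<alpha>) (a * \<beta>) c"
  have "ext_code x \<alpha> \<beta> S = ?f ` (UNIV \<times> S)"
    by (auto simp: ext_code_def)
  moreover have "inj_on ?f (UNIV \<times> S)"
    using assms by (auto simp: inj_on_def ext_vec_eq_iff [of x n] subset_iff)
  ultimately have "card (ext_code x \<alpha> \<beta> S) = card ((UNIV :: bit set) \<times> S)"
    by (simp only: card_image)
  also have "\<dots> = 2 * card S"
    by (simp only: card_cartesian_product card_UNIV_bit)
  finally show ?thesis .
qed

lemma subspace_ext_code:
  assumes x: "x \<in> carrier_vec n" and S: "subspace class_ring S (module_vec TYPE(bit) n)"
  shows "subspace class_ring (ext_code x \<alpha> \<beta> S) (module_vec TYPE(bit) (n + 2))"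
proof (rule subspace_vecI)
  note S_carrier = subspace_vecD(1) [OF S]
  show "ext_code x \<alpha> \<beta> S \<subseteq> carrier_vec (n + 2)"
    using x S_carrier unfolding ext_code_def by (blast intro: ext_vec_carrier)
  have "0\<^sub>v (n + 2) = ext_vec x (0 * \<alpha>) (0 * \<beta>) (0\<^sub>v n)"
    using ext_vec_zero [OF x] by simp
  then show "0\<^sub>v (n + 2) \<in> ext_code x \<alpha> \<beta> S"
    unfolding ext_code_def using subspace_vecD(2) [OF S] by blast
  fix v w r
  assume "v \<in> ext_code x \<alpha> \<beta> S"
  then obtain a c where c: "c \<in> S" and v: "v = ext_vec x (a * \<alpha>) (a * \<beta>) c"
    unfolding ext_code_def by blast
  have "r \<cdot>\<^sub>v v = ext_vec x ((r * a) * \<alpha>) ((r * a) * \<beta>) (r \<cdot>\<^sub>v c)"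
    using x c S_carrier by (auto simp: v ext_vec_smult [of x n] mult.assoc)
  then show "r \<cdot>\<^sub>v v \<in> ext_code x \<alpha> \<beta> S"
    unfolding ext_code_def using subspace_vecD(4) [OF S c] by blast
  assume "w \<in> ext_code x \<alpha> \<beta> S"
  then obtain a' c' where c': "c' \<in> S" and w: "w = ext_vec x (a' * \<alpha>) (a' * \<beta>) c'"
    unfolding ext_code_def by blast
  have "c \<in> carrier_vec n" and "c' \<in> carrier_vec n"
    using c c' S_carrier by auto
  then have "v + w = ext_vec x ((a + a') * \<alpha>) ((a + a') * \<beta>) (c + c')"
    by (simp add: v w ext_vec_add [OF x] distrib_right)
  then show "v + w \<in> ext_code x \<alpha> \<beta> S"
    unfolding ext_code_def using subspace_vecD(3) [OF S c c'] by blast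
qed

lemma code_dim_ext_code:
  assumes x: "x \<in> carrier_vec n" and S: "subspace class_ring S (module_vec TYPE(bit) n)"
    and "\<alpha> \<noteq> 0 \<or> \<beta> \<noteq> 0"
  shows "code_dim (n + 2) (ext_code x \<alpha> \<beta> S) = code_dim n S + 1"
  using card_ext_code [OF x subspace_vecD(1) [OF S] assms(3)] card_eq_two_pow_code_dim [OF S]
  by (intro code_dim_eqI [OF subspace_ext_code [OF x S]]) simp

lemma code_dim_image_ext_vec:
  assumes x: "x \<in> carrier_vec n" and S: "subspace class_ring S (module_vec TYPE(bit) n)"
  shows "code_dim (n + 2) (ext_vec x 0 0 ` S) = code_dim n S"
proof (rule code_dim_eqI)
  have "ext_vec x 0 0 ` S = ext_code x 0 0 S"
    by (auto simp: ext_code_def)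
  then show "subspace class_ring (ext_vec x 0 0 ` S) (module_vec TYPE(bit) (n + 2))"
    using subspace_ext_code [OF x S] by simp
  have "inj_on (ext_vec x 0 0) S"
    using x subspace_vecD(1) [OF S] by (auto simp: inj_on_def ext_vec_eq_iff [of x n] subset_iff)
  then have "card (ext_vec x 0 0 ` S) = card S"
    by (rule card_image)
  then show "card (ext_vec x 0 0 ` S) = 2 ^ code_dim n S"
    using card_eq_two_pow_code_dim [OF S] by simp
qed

lemma dual_ext_code:
  assumes x: "x \<in> carrier_vec n" "x \<bullet> x = 0" and C: "C \<subseteq> carrier_vec n" "0\<^sub>v n \<in> C"
  shows "dual (n + 2) (ext_code x 1 0 C) = ext_code x 0 1 (dual n C)"
proof (intro equalityI subsetI)
  fix v assume v: "v \<in> dual (n + 2) (ext_code x 1 0 C)"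
  then have "v \<in> carrier_vec (n + 2)" unfolding dual_def by blast
  then obtain a b d where d: "d \<in> carrier_vec n" and v_eq: "v = ext_vec x a b d"
    by (rule ext_vec_cases [OF x])
  have orth: "a * a' + d \<bullet> c = 0" if "c \<in> C" for a' c
  proof -
    have "ext_vec x a' 0 c \<in> ext_code x 1 0 C"
      using that unfolding ext_code_def by force
    then have "v \<bullet> ext_vec x a' 0 c = 0" using v unfolding dual_def by blast
    then show ?thesis
      using that C x d by (simp add: v_eq scalar_prod_ext_vec [of x n] subset_iff)
  qed
  have "a = 0" using orth [where a' = 1 and c = "0\<^sub>v n"] C d by simp
  moreover have "d \<in> dual n C" using orth [where a' = 0] d unfolding dual_def by simp
  ultimately show "v \<in> ext_code x 0 1 (dual n C)"
    unfolding ext_code_def v_eq by force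
next
  fix v assume "v \<in> ext_code x 0 1 (dual n C)"
  then obtain b d where d: "d \<in> dual n C" and v_eq: "v = ext_vec x 0 b d"
    unfolding ext_code_def by auto
  have "v \<bullet> w = 0" if "w \<in> ext_code x 1 0 C" for w
  proof -
    from that obtain a c where "c \<in> C" and "w = ext_vec x a 0 c"
      unfolding ext_code_def by auto
    then show ?thesis
      using d C x by (auto simp: v_eq dual_def scalar_prod_ext_vec [of x n] subset_iff)
  qed
  moreover have "v \<in> carrier_vec (n + 2)"
    using d x(1) unfolding v_eq dual_def by (blast intro: ext_vec_carrier)
  ultimately show "v \<in> dual (n + 2) (ext_code x 1 0 C)"
    unfolding dual_def by blast
qed

lemma code_hull_ext_code:
  assumes x: "x \<in> carrier_vec n" "x \<bullet> x = 0" and C: "C \<subseteq> carrier_vec n" "0\<^sub>v n \<in> C"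
  shows "code_hull (n + 2) (ext_code x 1 0 C) = ext_vec x 0 0 ` code_hull n C"
proof (intro equalityI subsetI)
  fix v assume "v \<in> code_hull (n + 2) (ext_code x 1 0 C)"
  then have "v \<in> ext_code x 1 0 C" and "v \<in> ext_code x 0 1 (dual n C)"
    unfolding code_hull_def dual_ext_code [OF x C] by auto
  from \<open>v \<in> ext_code x 1 0 C\<close> obtain a c where c: "c \<in> C" and v_c: "v = ext_vec x a 0 c"
    unfolding ext_code_def by auto
  from \<open>v \<in> ext_code x 0 1 (dual n C)\<close> obtain b d where d: "d \<in> dual n C" and v_d: "v = ext_vec x 0 b d"
    unfolding ext_code_def by auto
  have "a = 0 \<and> 0 = b \<and> c = d"
    using v_c v_d c d x C by (simp add: ext_vec_eq_iff [of x n] dual_def subset_iff)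
  then show "v \<in> ext_vec x 0 0 ` code_hull n C"
    using c d v_d unfolding code_hull_def by blast
next
  fix v assume "v \<in> ext_vec x 0 0 ` code_hull n C"
  then obtain c where "c \<in> C" "c \<in> dual n C" and v_c: "v = ext_vec x 0 0 c"
    unfolding code_hull_def by blast
  moreover have "v = ext_vec x (0 * \<alpha>) (0 * \<beta>) c" for \<alpha> \<beta> :: bit
    by (simp add: v_c)
  ultimately have "v \<in> ext_code x 1 0 C \<and> v \<in> ext_code x 0 1 (dual n C)"
    unfolding ext_code_def by blast
  then show "v \<in> code_hull (n + 2) (ext_code x 1 0 C)"
    unfolding code_hull_def dual_ext_code [OF x C] by blast
qed

theorem theorem3:
  fixes n k l :: nat and G H :: "bit mat" and C :: "bit vec set" and x :: "bit vec"
  assumes "is_generator_matrix n k G C"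
    and "is_parity_check_matrix n k H C"
    and "code_dim n (code_hull n C) = l" and "l \<le> k"
    and "x \<in> carrier_vec n" and "x \<bullet> x = 0"
  shows "is_generator_matrix (n + 2) (k + 1) (constr_G3 x G) (code_of (n + 2) (constr_G3 x G))
     \<and> code_dim (n + 2) (code_hull (n + 2) (code_of (n + 2) (constr_G3 x G))) = l
     \<and> is_parity_check_matrix (n + 2) (k + 1) (constr_H3 x H) (code_of (n + 2) (constr_G3 x G))"
proof -
  note x = assms(5,6)
  have G: "G \<in> carrier_mat k n" and C: "C = code_of n G" and dim_C: "code_dim n C = k"
    using assms(1) by (auto simp: is_generator_matrix_def)
  have H: "H \<in> carrier_mat (n - k) n" and H_dual: "code_of n H = dual n C"
    and dim_dual: "code_dim n (dual n C) = n - k"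
    using assms(2) by (auto simp: is_parity_check_matrix_def is_generator_matrix_def)
  have C_sub: "subspace class_ring C (module_vec TYPE(bit) n)"
    unfolding C by (rule subspace_code_of [OF G])
  note C_carrier = subspace_vecD(1) [OF C_sub] and C_0 = subspace_vecD(2) [OF C_sub]
  have "k \<le> n" using code_dim_le [OF C_sub] dim_C by simp
  let ?C3 = "code_of (n + 2) (constr_G3 x G)"
  have C3: "?C3 = ext_code x 1 0 C"
    unfolding C by (rule code_of_constr_G3 [OF G x(1)])
  have D3: "dual (n + 2) ?C3 = ext_code x 0 1 (dual n C)"
    unfolding C3 by (rule dual_ext_code [OF x C_carrier C_0])
  have H3: "code_of (n + 2) (constr_H3 x H) = dual (n + 2) ?C3"
    unfolding D3 H_dual [symmetric] by (rule code_of_constr_H3 [OF H x(1)])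
  have "code_dim (n + 2) ?C3 = k + 1"
    unfolding C3 using code_dim_ext_code [OF x(1) C_sub, of 1 0] dim_C by simp
  moreover have "code_dim (n + 2) (dual (n + 2) ?C3) = n + 2 - (k + 1)"
    unfolding D3 using code_dim_ext_code [OF x(1) subspace_dual [OF C_carrier], of 0 1] dim_dual \<open>k \<le> n\<close>
    by simp
  moreover have "code_dim (n + 2) (code_hull (n + 2) ?C3) = l"
    unfolding C3 code_hull_ext_code [OF x C_carrier C_0]
    using code_dim_image_ext_vec [OF x(1) subspace_code_hull [OF C_sub]] assms(3) by simp
  moreover have "constr_H3 x H \<in> carrier_mat (n + 2 - (k + 1)) (n + 2)"
    using carrier_constr_H3 [OF H] \<open>k \<le> n\<close> by (simp add: Suc_diff_le)
  ultimately show ?thesis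
    unfolding is_parity_check_matrix_def is_generator_matrix_def
    using carrier_constr_G3 [OF G] H3 by (intro conjI refl) assumption+
qed

end
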